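(* Let $m,n\geq2$, let $\mathbf p\in\mathbb R^m$, $\mathbf q\in\mathbb R^n$ be probability vectors with all entries strictly positive, and let $\alpha\geq0$, $\alpha\neq1$. Let $H$ denote either the Rényi entropy $H^R_\alpha(P)=\frac1{1-\alpha}\log\big(\sum_{i,j}p_{i,j}^\alpha\big)$ or the Tsallis entropy $H^T_\alpha(P)=\frac1{1-\alpha}\big(\sum_{i,j}p_{i,j}^\alpha-1\big)$. If $\tilde P\in\mathcal C(\mathbf p,\mathbf q)$ satisfies $H(\tilde P)=\inf_{P\in\mathcal C(\mathbf p,\mathbf q)}H(P)$, then $\tilde P\in\mathscr C(\mathbf p,\mathbf q)=\mathcal C_e(\mathbf p,\mathbf q)$ and $H(\tilde P)=\min_{P\in\mathscr C(\mathbf p,\mathbf q)}H(P)$.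
   Context: $\mathcal C(\mathbf p,\mathbf q)$ is the set of nonnegative $m\times n$ matrices with row sums $p_i$ and column sums $q_j$; $\mathcal C_e(\mathbf p,\mathbf q)$ its set of extreme points. $V(P)=\{(i,j):p_{i,j}\neq0\}$. $\mathscr C(\mathbf p,\mathbf q)$ is the set of $P\in\mathcal C(\mathbf p,\mathbf q)$ with $V(P)\subset T$ for some tree $T\subset[m]\times[n]$ with $|T|=m+n-1$. Graph notions: two distinct points of $[m]\times[n]$ are adjacent iff they share a row or a column; a circuit is a cyclic sequence $v_0,\dots,v_{s-1}$ ($s\geq4$) of pairwise distinct points $v_k=(i_k,j_k)$ with (indices mod $s$) $v_k,v_{k+1}$ adjacent and $(i_{k+2}-i_k)(j_{k+2}-j_k)\neq0$ for all $k$; a tree is a connected subset containing no circuit. *)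

theory Defs
  imports Main "HOL-Analysis.Analysis"
begin

text \<open>Matrices are functions nat => nat => real, indices 0-based: rows 0..<m, columns 0..<n.
  Entries outside the index box are required to be 0, so that matrices correspond
  exactly to elements of R^(m x n).\<close>

definition transport_polytope ::
  "nat \<Rightarrow> nat \<Rightarrow> (nat \<Rightarrow> real) \<Rightarrow> (nat \<Rightarrow> real) \<Rightarrow> (nat \<Rightarrow> nat \<Rightarrow> real) set" where
  "transport_polytope m n p q =
     {P. (\<forall>i j. (i \<ge> m \<or> j \<ge> n) \<longrightarrow> P i j = 0)
       \<and> (\<forall>i<m. \<forall>j<n. P i j \<ge> 0)
       \<and> (\<forall>i<m. (\<Sum>j<n. P i j) = p i)
       \<and> (\<forall>j<n. (\<Sum>i<m. P i j) = q j)}"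

definition extreme_points_of :: "(nat \<Rightarrow> nat \<Rightarrow> real) set \<Rightarrow> (nat \<Rightarrow> nat \<Rightarrow> real) set" where
  "extreme_points_of S =
     {x \<in> S. \<not> (\<exists>a\<in>S. \<exists>b\<in>S. a \<noteq> b \<and>
                 (\<exists>t::real. 0 < t \<and> t < 1 \<and> x = (\<lambda>i j. t * a i j + (1 - t) * b i j)))}"

definition support :: "nat \<Rightarrow> nat \<Rightarrow> (nat \<Rightarrow> nat \<Rightarrow> real) \<Rightarrow> (nat \<times> nat) set" where
  "support m n P = {(i, j). i < m \<and> j < n \<and> P i j \<noteq> 0}"

definition adjacent :: "nat \<times> nat \<Rightarrow> nat \<times> nat \<Rightarrow> bool" where
  "adjacent u v \<longleftrightarrow> u \<noteq> v \<and> (fst u = fst v \<or> snd u = snd v)"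

definition is_circuit :: "(nat \<times> nat) list \<Rightarrow> bool" where
  "is_circuit vs \<longleftrightarrow> length vs \<ge> 4 \<and> distinct vs \<and>
     (\<forall>k < length vs.
        adjacent (vs ! k) (vs ! ((k + 1) mod length vs)) \<and>
        fst (vs ! ((k + 2) mod length vs)) \<noteq> fst (vs ! k) \<and>
        snd (vs ! ((k + 2) mod length vs)) \<noteq> snd (vs ! k))"

definition connected_pts :: "(nat \<times> nat) set \<Rightarrow> bool" where
  "connected_pts T \<longleftrightarrow>
     (\<forall>u\<in>T. \<forall>v\<in>T. (u, v) \<in> {(x, y). x \<in> T \<and> y \<in> T \<and> adjacent x y}\<^sup>*)"

definition is_tree :: "(nat \<times> nat) set \<Rightarrow> bool" where
  "is_tree T \<longleftrightarrow> connected_pts T \<and> \<not> (\<exists>vs. set vs \<subseteq> T \<and> is_circuit vs)"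

definition tree_polytope ::
  "nat \<Rightarrow> nat \<Rightarrow> (nat \<Rightarrow> real) \<Rightarrow> (nat \<Rightarrow> real) \<Rightarrow> (nat \<Rightarrow> nat \<Rightarrow> real) set" where
  "tree_polytope m n p q =
     {P \<in> transport_polytope m n p q.
        \<exists>T. T \<subseteq> {0..<m} \<times> {0..<n} \<and> is_tree T \<and> card T = m + n - 1
            \<and> support m n P \<subseteq> T}"

text \<open>Renyi and Tsallis entropies (natural log; Isabelle's convention 0 powr a = 0,
  i.e. zero entries contribute nothing, also for alpha = 0).\<close>
definition renyi_entropy :: "real \<Rightarrow> nat \<Rightarrow> nat \<Rightarrow> (nat \<Rightarrow> nat \<Rightarrow> real) \<Rightarrow> real" where
  "renyi_entropy \<alpha> m n P = (1 / (1 - \<alpha>)) * ln (\<Sum>i<m. \<Sum>j<n. P i j powr \<alpha>)"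

definition tsallis_entropy :: "real \<Rightarrow> nat \<Rightarrow> nat \<Rightarrow> (nat \<Rightarrow> nat \<Rightarrow> real) \<Rightarrow> real" where
  "tsallis_entropy \<alpha> m n P = (1 / (1 - \<alpha>)) * ((\<Sum>i<m. \<Sum>j<n. P i j powr \<alpha>) - 1)"

end

(* Let S(P) be the sum of the entries of P raised to the power alpha.  Both entropies are
   increasing functions of S when alpha < 1 and decreasing ones when alpha > 1, so a minimiser of
   the entropy on C(p,q) minimises resp. maximises S there.

   Call a set of cells mated if each of its cells shares its row with another cell of the set and
   its column with yet another one.  A finite mated set contains an alternating cycle
   (r0,k0), (r0,k1), (r1,k1), ..., and the +1/-1 pattern d along such a cycle has zero row and
   column sums.  If the support of P contains a nonempty mated set, then P + e d and P - e d lie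
   in C(p,q) for small e > 0, so P is not extreme; S is strictly concave (0 < alpha < 1) or
   strictly convex (alpha > 1) along this segment, and for alpha = 0 moving along d until an entry
   vanishes shrinks the support, so P is not a minimiser either.  Conversely, two distinct
   matrices of C(p,q) differ on a nonempty mated set, so P is extreme when its support has no
   mated subset.

   The supports without mated subsets are exactly the circuit-free ones, and each of them can be
   extended, one row or column at a time, to a connected circuit-free set of m + n - 1 cells,
   i.e. a spanning tree of the bipartite graph of rows and columns.  Hence the extreme points of
   C(p,q) are the matrices supported on trees. *)

theory Submission
  imports Defs
begin

section \<open>Peelable sets of cells\<close>

definition mated :: "('a \<times> 'b) set \<Rightarrow> bool" where
  "mated Y \<longleftrightarrow> (\<forall>c\<in>Y. (\<exists>c'\<in>Y. c' \<noteq> c \<and> fst c' = fst c) \<and> (\<exists>c'\<in>Y. c' \<noteq> c \<and> snd c' = snd c))"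

lemma mated_col_mate: "mated Y \<Longrightarrow> (i, j) \<in> Y \<Longrightarrow> \<exists>i'. i' \<noteq> i \<and> (i', j) \<in> Y"
  unfolding mated_def by (metis prod.collapse snd_conv)

lemma mated_row_mate: "mated Y \<Longrightarrow> (i, j) \<in> Y \<Longrightarrow> \<exists>j'. j' \<noteq> j \<and> (i, j') \<in> Y"
  unfolding mated_def by (metis prod.collapse fst_conv)

text \<open>For finite X this means that X can be emptied by repeatedly deleting a point that is alone
  in its row or in its column.\<close>
definition peelable :: "('a \<times> 'b) set \<Rightarrow> bool" where
  "peelable X \<longleftrightarrow> \<not> (\<exists>Y\<subseteq>X. Y \<noteq> {} \<and> mated Y)"

lemma peelable_subset: "peelable X \<Longrightarrow> Y \<subseteq> X \<Longrightarrow> peelable Y"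
  unfolding peelable_def by blast

lemma peelable_singleton: "peelable {c}"
  unfolding peelable_def mated_def by (auto simp: subset_singleton_iff)

lemma peelable_insert_new_row:
  assumes "peelable X" "i \<notin> fst ` X"
  shows "peelable (insert (i, j) X)"
  unfolding peelable_def
proof
  assume "\<exists>Y\<subseteq>insert (i, j) X. Y \<noteq> {} \<and> mated Y"
  then obtain Y where Y: "Y \<subseteq> insert (i, j) X" "Y \<noteq> {}" "mated Y" by blast
  have "(i, j) \<notin> Y"
  proof
    assume "(i, j) \<in> Y"
    then obtain j' where "j' \<noteq> j" "(i, j') \<in> Y" using mated_row_mate[OF Y(3)] by blast
    then have "(i, j') \<in> X" using Y(1) by blast
    then show False using assms(2) by (metis fst_conv image_eqI)
  qed
  then show False using Y assms(1) unfolding peelable_def by blast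
qed

lemma peelable_insert_new_col:
  assumes "peelable X" "j \<notin> snd ` X"
  shows "peelable (insert (i, j) X)"
  unfolding peelable_def
proof
  assume "\<exists>Y\<subseteq>insert (i, j) X. Y \<noteq> {} \<and> mated Y"
  then obtain Y where Y: "Y \<subseteq> insert (i, j) X" "Y \<noteq> {}" "mated Y" by blast
  have "(i, j) \<notin> Y"
  proof
    assume "(i, j) \<in> Y"
    then obtain i' where "i' \<noteq> i" "(i', j) \<in> Y" using mated_col_mate[OF Y(3)] by blast
    then have "(i', j) \<in> X" using Y(1) by blast
    then show False using assms(2) by (metis snd_conv image_eqI)
  qed
  then show False using Y assms(1) unfolding peelable_def by blast
qed

section \<open>Alternating cycles and circuits\<close>

text \<open>Rows and columns are the vertices of a bipartite graph whose edges are the points of Y.\<close>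
definition alternating_path :: "('a \<times> 'b) set \<Rightarrow> nat \<Rightarrow> (nat \<Rightarrow> 'a) \<Rightarrow> (nat \<Rightarrow> 'b) \<Rightarrow> bool" where
  "alternating_path Y L r k \<longleftrightarrow> inj_on r {..<L} \<and> inj_on k {..L} \<and>
     (\<forall>t<L. (r t, k t) \<in> Y \<and> (r t, k (Suc t)) \<in> Y) \<and> k L \<in> snd ` Y"

definition alternating_cycle :: "('a \<times> 'b) set \<Rightarrow> nat \<Rightarrow> (nat \<Rightarrow> 'a) \<Rightarrow> (nat \<Rightarrow> 'b) \<Rightarrow> bool" where
  "alternating_cycle Y M r k \<longleftrightarrow> 2 \<le> M \<and> inj_on r {..<M} \<and> inj_on k {..<M} \<and>
     (\<forall>t<M. (r t, k t) \<in> Y \<and> (r t, k (Suc t mod M)) \<in> Y)"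

lemma alternating_cycle_mono: "alternating_cycle Y M r k \<Longrightarrow> Y \<subseteq> Z \<Longrightarrow> alternating_cycle Z M r k"
  unfolding alternating_cycle_def by blast

lemma alternating_path_length_bound:
  assumes "finite Y" "alternating_path Y L r k"
  shows "L < card (snd ` Y)"
proof -
  have "k t \<in> snd ` Y" if "t \<le> L" for t
  proof (cases "t < L")
    case True
    then have "(r t, k t) \<in> Y" using assms(2) unfolding alternating_path_def by blast
    then show ?thesis by force
  next
    case False
    then show ?thesis using that assms(2) unfolding alternating_path_def by simp
  qed
  then have "card (k ` {..L}) \<le> card (snd ` Y)"
    by (intro card_mono) (use assms(1) in auto)
  moreover have "card (k ` {..L}) = Suc L"
    using assms(2) unfolding alternating_path_def by (simp add: card_image)
  ultimately show ?thesis by simp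
qed

lemma inj_on_insert_fun_upd:
  "inj_on f A \<Longrightarrow> x \<notin> A \<Longrightarrow> y \<notin> f ` A \<Longrightarrow> inj_on (f(x := y)) (insert x A)"
  unfolding inj_on_insert by (auto simp: inj_on_fun_updI)

lemma alternating_cycle_close:
  assumes P: "alternating_path Y L r k" and "s < L"
    and "(i, k s) \<in> Y" "(i, k L) \<in> Y" "i \<notin> r ` {s..<L}"
  shows "\<exists>M r' k'. alternating_cycle Y M r' k'"
proof -
  define M where "M = Suc (L - s)"
  define r' where "r' = (\<lambda>t. r (s + t))(L - s := i)"
  define k' where "k' t = k (s + t)" for t
  have r: "inj_on r {..<L}" "\<And>t. t < L \<Longrightarrow> (r t, k t) \<in> Y \<and> (r t, k (Suc t)) \<in> Y"
    and k: "inj_on k {..L}" using P unfolding alternating_path_def by auto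
  have "inj_on (\<lambda>t. r (s + t)) {..<L - s}"
  proof (rule inj_onI)
    fix x y assume "x \<in> {..<L - s}" "y \<in> {..<L - s}" "r (s + x) = r (s + y)"
    then show "x = y" using inj_onD[OF r(1)] by fastforce
  qed
  moreover have "i \<notin> (\<lambda>t. r (s + t)) ` {..<L - s}" using assms(5) by force
  ultimately have "inj_on r' {..<M}"
    unfolding r'_def M_def lessThan_Suc by (intro inj_on_insert_fun_upd) auto
  moreover have "inj_on k' {..<M}"
  proof (rule inj_onI)
    fix x y assume "x \<in> {..<M}" "y \<in> {..<M}" "k' x = k' y"
    then have "s + x \<le> L" "s + y \<le> L" "k (s + x) = k (s + y)"
      using \<open>s < L\<close> unfolding k'_def M_def by auto
    then show "x = y" using inj_onD[OF k] by fastforce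
  qed
  moreover have "(r' t, k' t) \<in> Y \<and> (r' t, k' (Suc t mod M)) \<in> Y" if t: "t < M" for t
  proof -
    consider "t = L - s" | "t < L - s" using t unfolding M_def less_Suc_eq by blast
    then show ?thesis
    proof cases
      case 1
      then show ?thesis using assms(3,4) \<open>s < L\<close> by (simp add: r'_def k'_def M_def)
    next
      case 2
      then show ?thesis using r(2)[of "s + t"] by (simp add: r'_def k'_def M_def)
    qed
  qed
  moreover have "2 \<le> M" using \<open>s < L\<close> by (simp add: M_def)
  ultimately have "alternating_cycle Y M r' k'" unfolding alternating_cycle_def by blast
  then show ?thesis by blast
qed

lemma alternating_path_extend:
  assumes P: "alternating_path Y L r k"
    and "(i, k L) \<in> Y" "i \<notin> r ` {..<L}" "(i, j) \<in> Y" "j \<notin> k ` {..L}"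
  shows "alternating_path Y (Suc L) (r(L := i)) (k(Suc L := j))"
  unfolding alternating_path_def
proof (intro conjI allI impI)
  have r: "inj_on r {..<L}" "\<And>t. t < L \<Longrightarrow> (r t, k t) \<in> Y \<and> (r t, k (Suc t)) \<in> Y"
    and k: "inj_on k {..L}" using P unfolding alternating_path_def by auto
  show "inj_on (r(L := i)) {..<Suc L}"
    unfolding lessThan_Suc using r(1) assms(3) by (intro inj_on_insert_fun_upd) auto
  show "inj_on (k(Suc L := j)) {..Suc L}"
    unfolding atMost_Suc using k assms(5) by (intro inj_on_insert_fun_upd) auto
  fix t assume "t < Suc L"
  then show "((r(L := i)) t, (k(Suc L := j)) t) \<in> Y"
    and "((r(L := i)) t, (k(Suc L := j)) (Suc t)) \<in> Y"
    using r(2)[of t] assms(2,4) by (auto simp: less_Suc_eq)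
next
  show "(k(Suc L := j)) (Suc L) \<in> snd ` Y" using assms(4) by force
qed

lemma alternating_path_step:
  assumes P: "alternating_path Y L r k" and "mated Y"
    and no_cycle: "\<nexists>M r k. alternating_cycle Y M r k"
  shows "\<exists>r' k'. alternating_path Y (Suc L) r' k'"
proof -
  have r: "inj_on r {..<L}" "\<And>t. t < L \<Longrightarrow> (r t, k t) \<in> Y \<and> (r t, k (Suc t)) \<in> Y"
    using P unfolding alternating_path_def by auto
  have "\<exists>i0. (i0, k L) \<in> Y \<and> (0 < L \<longrightarrow> i0 = r (L - 1))"
  proof (cases L)
    case 0
    then show ?thesis using P unfolding alternating_path_def by auto
  next
    case (Suc L')
    then show ?thesis using r(2)[of L'] by auto
  qed
  then obtain i0 where i0: "(i0, k L) \<in> Y" "0 < L \<Longrightarrow> i0 = r (L - 1)" by blast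
  obtain i where i: "(i, k L) \<in> Y" "i \<noteq> i0"
    using mated_col_mate[OF assms(2) i0(1)] by blast
  have i_new: "i \<notin> r ` {..<L}"
  proof
    assume "i \<in> r ` {..<L}"
    then obtain s where s: "s < L" "r s = i" by auto
    then have "Suc s < L" using i(2) i0(2) by (cases "Suc s = L") auto
    moreover have "i \<notin> r ` {Suc s..<L}"
      using inj_onD[OF r(1), of s] s by fastforce
    ultimately show False
      using alternating_cycle_close[OF P, of "Suc s" i] r(2)[of s] s i(1) no_cycle by simp
  qed
  obtain j where j: "(i, j) \<in> Y" "j \<noteq> k L"
    using mated_row_mate[OF assms(2) i(1)] by blast
  have j_new: "j \<notin> k ` {..L}"
  proof
    assume "j \<in> k ` {..L}"
    then obtain s where s: "s < L" "k s = j" using j(2) by (auto simp: le_less)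
    moreover have "i \<notin> r ` {s..<L}" using i_new by auto
    ultimately show False
      using alternating_cycle_close[OF P, of s i] i(1) j(1) no_cycle by simp
  qed
  show ?thesis using alternating_path_extend[OF P i(1) i_new j(1) j_new] by blast
qed

text \<open>Without cycles, the mates of the last column of a path would extend it forever, beyond the
  bound on the length of paths.\<close>
lemma mated_imp_alternating_cycle:
  assumes "finite Y" "Y \<noteq> {}" "mated Y"
  shows "\<exists>M r k. alternating_cycle Y M r k"
proof (rule ccontr)
  assume no_cycle: "\<nexists>M r k. alternating_cycle Y M r k"
  have "\<exists>r k. alternating_path Y L r k" for L
  proof (induction L)
    case 0
    obtain c where "c \<in> Y" using assms(2) by blast
    then have "alternating_path Y 0 r (\<lambda>_. snd c)" for r
      unfolding alternating_path_def by auto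
    then show ?case by blast
  next
    case (Suc L)
    then show ?case using alternating_path_step assms(3) no_cycle by blast
  qed
  then obtain r k where "alternating_path Y (card (snd ` Y)) r k" by blast
  then show False using alternating_path_length_bound[OF assms(1)] by blast
qed

text \<open>The points (r 0, k 0), (r 0, k 1), (r 1, k 1), (r 1, k 2), ... of an alternating cycle, in
  cyclic order with period 2 M.\<close>
definition cycle_vertex :: "nat \<Rightarrow> (nat \<Rightarrow> 'a) \<Rightarrow> (nat \<Rightarrow> 'b) \<Rightarrow> nat \<Rightarrow> 'a \<times> 'b" where
  "cycle_vertex M r k x =
     (r (x div 2 mod M), k (if even x then x div 2 mod M else Suc (x div 2) mod M))"

lemma Suc_mod_neq_self: "2 \<le> M \<Longrightarrow> a < M \<Longrightarrow> Suc a mod M \<noteq> a"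
  by (cases "Suc a = M") auto

lemma cycle_vertex_mod: "cycle_vertex M r k (x mod (2 * M)) = cycle_vertex M r k x"
proof -
  have x: "x mod (2 * M) = 2 * (x div 2 mod M) + x mod 2" by (rule mod_mult2_eq)
  have "x mod (2 * M) div 2 = x div 2 mod M" "even (x mod (2 * M)) = even x"
    unfolding x by (simp_all add: even_iff_mod_2_eq_zero)
  then show ?thesis unfolding cycle_vertex_def by (simp add: mod_Suc_eq)
qed

lemma cycle_vertex_in:
  assumes "alternating_cycle Y M r k"
  shows "cycle_vertex M r k x \<in> Y"
proof -
  let ?t = "x div 2 mod M"
  have "?t < M" using assms unfolding alternating_cycle_def by simp
  then have "(r ?t, k ?t) \<in> Y" "(r ?t, k (Suc ?t mod M)) \<in> Y"
    using assms unfolding alternating_cycle_def by blast+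
  moreover have "Suc ?t mod M = Suc (x div 2) mod M" by (rule mod_Suc_eq)
  ultimately show ?thesis unfolding cycle_vertex_def by simp
qed

lemma cycle_vertex_step:
  assumes "alternating_cycle Y M r k"
  shows "adjacent (cycle_vertex M r k x) (cycle_vertex M r k (x + 1))
    \<and> fst (cycle_vertex M r k (x + 2)) \<noteq> fst (cycle_vertex M r k x)
    \<and> snd (cycle_vertex M r k (x + 2)) \<noteq> snd (cycle_vertex M r k x)"
proof -
  have M: "2 \<le> M" and r: "inj_on r {..<M}" and k: "inj_on k {..<M}"
    using assms unfolding alternating_cycle_def by auto
  define a where "a = x div 2 mod M"
  define a1 where "a1 = Suc a mod M"
  define a2 where "a2 = Suc a1 mod M"
  have a: "a < M" unfolding a_def using M by simp
  have a1: "a1 < M" "a1 \<noteq> a" unfolding a1_def using Suc_mod_neq_self[OF M a] M by auto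
  have a2: "a2 < M" "a2 \<noteq> a1" unfolding a2_def using Suc_mod_neq_self[OF M a1(1)] M by auto
  have s1: "Suc (x div 2) mod M = a1" unfolding a1_def a_def by (simp add: mod_Suc_eq)
  have s2: "Suc (Suc (x div 2)) mod M = a2" unfolding a2_def s1[symmetric] by (simp add: mod_Suc_eq)
  have rne: "r a1 \<noteq> r a" "r a2 \<noteq> r a1" using r a a1 a2 by (auto dest: inj_onD)
  have kne: "k a1 \<noteq> k a" "k a2 \<noteq> k a1" using k a a1 a2 by (auto dest: inj_onD)
  show ?thesis
  proof (cases "even x")
    case True
    have "(x + 1) div 2 = x div 2" "odd (x + 1)" "(x + 2) div 2 = Suc (x div 2)" "even (x + 2)"
      using True by auto
    then have "cycle_vertex M r k x = (r a, k a)" "cycle_vertex M r k (x + 1) = (r a, k a1)"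
      "cycle_vertex M r k (x + 2) = (r a1, k a1)"
      using True s1 unfolding cycle_vertex_def a_def by simp_all
    then show ?thesis using rne kne by (simp add: adjacent_def)
  next
    case False
    have "(x + 1) div 2 = Suc (x div 2)" "even (x + 1)" "(x + 2) div 2 = Suc (x div 2)" "odd (x + 2)"
      using False by presburger+
    then have "cycle_vertex M r k x = (r a, k a1)" "cycle_vertex M r k (x + 1) = (r a1, k a1)"
      "cycle_vertex M r k (x + 2) = (r a1, k a2)"
      using False s1 s2 unfolding cycle_vertex_def a_def by simp_all
    then show ?thesis using rne kne by (simp add: adjacent_def)
  qed
qed

lemma inj_on_cycle_vertex:
  assumes "alternating_cycle Y M r k"
  shows "inj_on (cycle_vertex M r k) {..<2 * M}"
proof (rule inj_onI)
  have M: "2 \<le> M" and r: "inj_on r {..<M}" and k: "inj_on k {..<M}"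
    using assms unfolding alternating_cycle_def by auto
  fix x y assume xy: "x \<in> {..<2 * M}" "y \<in> {..<2 * M}" "cycle_vertex M r k x = cycle_vertex M r k y"
  have "x div 2 < M" "y div 2 < M" using xy by auto
  moreover have "r (x div 2 mod M) = r (y div 2 mod M)" using xy(3) by (simp add: cycle_vertex_def)
  ultimately have half: "x div 2 = y div 2" using r by (auto dest: inj_onD)
  show "x = y"
  proof (cases "even x = even y")
    case True
    then show ?thesis using half by (metis div_mult_mod_eq parity_cases)
  next
    case False
    define a where "a = x div 2"
    have a: "a < M" using \<open>x div 2 < M\<close> by (simp add: a_def)
    have "k a = k (Suc a mod M)"
      using xy(3) False half a unfolding cycle_vertex_def a_def[symmetric]
      by (cases "even x") auto
    then have "a = Suc a mod M" using k a M by (auto dest: inj_onD)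
    then show ?thesis using Suc_mod_neq_self[OF M a] by simp
  qed
qed

lemma alternating_cycle_imp_circuit:
  assumes C: "alternating_cycle Y M r k"
  shows "\<exists>vs. set vs \<subseteq> Y \<and> is_circuit vs"
proof -
  have M: "2 \<le> M" using C unfolding alternating_cycle_def by simp
  define vs where "vs = map (cycle_vertex M r k) [0..<2 * M]"
  have len: "length vs = 2 * M" unfolding vs_def by simp
  have nth: "vs ! (x mod (2 * M)) = cycle_vertex M r k x" for x
    using M by (simp add: vs_def cycle_vertex_mod)
  have "set vs \<subseteq> Y" unfolding vs_def using cycle_vertex_in[OF C] by auto
  moreover have "is_circuit vs"
    unfolding is_circuit_def len
  proof (intro conjI allI impI)
    show "4 \<le> 2 * M" using M by simp
    show "distinct vs"
      unfolding vs_def using inj_on_cycle_vertex[OF C] by (simp add: distinct_map atLeast0LessThan)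
    fix x assume "x < 2 * M"
    then have "vs ! x = cycle_vertex M r k x" using nth[of x] by simp
    then show "adjacent (vs ! x) (vs ! ((x + 1) mod (2 * M)))"
      and "fst (vs ! ((x + 2) mod (2 * M))) \<noteq> fst (vs ! x)"
      and "snd (vs ! ((x + 2) mod (2 * M))) \<noteq> snd (vs ! x)"
      using cycle_vertex_step[OF C, of x] unfolding nth by simp_all
  qed
  ultimately show ?thesis by blast
qed

lemma circuit_imp_mated:
  assumes "is_circuit vs"
  shows "mated (set vs)"
  unfolding mated_def
proof
  fix c assume "c \<in> set vs"
  then obtain x where x: "x < length vs" "vs ! x = c" by (auto simp: in_set_conv_nth)
  define L where "L = length vs"
  have L: "4 \<le> L" "x < L" using assms x unfolding is_circuit_def L_def by simp_all
  have step: "adjacent (vs ! y) (vs ! ((y + 1) mod L))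
      \<and> fst (vs ! ((y + 2) mod L)) \<noteq> fst (vs ! y) \<and> snd (vs ! ((y + 2) mod L)) \<noteq> snd (vs ! y)"
    if "y < L" for y
    using assms that unfolding is_circuit_def L_def by blast
  define y where "y = (if x = 0 then L - 1 else x - 1)"
  have y: "y < L" "(y + 1) mod L = x" "(y + 2) mod L = (x + 1) mod L"
    using L by (cases "x = 0"; simp add: y_def mod_Suc)+
  define prev where "prev = vs ! y"
  define next' where "next' = vs ! ((x + 1) mod L)"
  have "(x + 1) mod L < L" using L by simp
  then have mem: "prev \<in> set vs" "next' \<in> set vs"
    using y(1) unfolding prev_def next'_def L_def by simp_all
  have adj: "adjacent c next'" "adjacent prev c"
    using step[OF L(2)] step[OF y(1)] x(2) y(2) unfolding prev_def next'_def by simp_all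
  have apart: "fst next' \<noteq> fst prev" "snd next' \<noteq> snd prev"
    using step[OF y(1)] y(3) unfolding prev_def next'_def by simp_all
  show "(\<exists>c'\<in>set vs. c' \<noteq> c \<and> fst c' = fst c) \<and> (\<exists>c'\<in>set vs. c' \<noteq> c \<and> snd c' = snd c)"
  proof (cases "fst c = fst next'")
    case True
    then have "snd prev = snd c" using adj(2) apart unfolding adjacent_def by auto
    then show ?thesis using True mem adj unfolding adjacent_def by auto
  next
    case False
    then have "snd c = snd next'" "fst prev = fst c" using adj apart unfolding adjacent_def by auto
    then show ?thesis using mem adj unfolding adjacent_def by auto
  qed
qed

lemma peelable_iff_no_circuit:
  assumes "finite T"
  shows "peelable T \<longleftrightarrow> \<not> (\<exists>vs. set vs \<subseteq> T \<and> is_circuit vs)"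
proof
  assume "peelable T"
  show "\<not> (\<exists>vs. set vs \<subseteq> T \<and> is_circuit vs)"
  proof
    assume "\<exists>vs. set vs \<subseteq> T \<and> is_circuit vs"
    then obtain vs where vs: "set vs \<subseteq> T" "is_circuit vs" by blast
    then have "set vs \<noteq> {}" unfolding is_circuit_def by auto
    then show False using \<open>peelable T\<close> vs circuit_imp_mated unfolding peelable_def by blast
  qed
next
  assume no_circuit: "\<not> (\<exists>vs. set vs \<subseteq> T \<and> is_circuit vs)"
  show "peelable T"
  proof (rule ccontr)
    assume "\<not> peelable T"
    then obtain Y where Y: "Y \<subseteq> T" "Y \<noteq> {}" "mated Y" unfolding peelable_def by blast
    then obtain M r k where "alternating_cycle Y M r k"
      using mated_imp_alternating_cycle finite_subset[OF Y(1) assms] by blast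
    then show False using alternating_cycle_imp_circuit Y(1) no_circuit by blast
  qed
qed

section \<open>Spanning trees\<close>

lemma adjacent_sym: "adjacent x y \<Longrightarrow> adjacent y x"
  unfolding adjacent_def by auto

lemma connected_pts_singleton: "connected_pts {c}"
  unfolding connected_pts_def by simp

lemma connected_pts_insert:
  assumes conn: "connected_pts T" and x: "x \<in> T" "adjacent c x"
  shows "connected_pts (insert c T)"
proof -
  define E where "E = {(u, v). u \<in> insert c T \<and> v \<in> insert c T \<and> adjacent u v}"
  have old: "(u, v) \<in> E\<^sup>*" if "u \<in> T" "v \<in> T" for u v
  proof -
    have "(u, v) \<in> {(u, v). u \<in> T \<and> v \<in> T \<and> adjacent u v}\<^sup>*"
      using conn that unfolding connected_pts_def by blast
    moreover have "{(u, v). u \<in> T \<and> v \<in> T \<and> adjacent u v}\<^sup>* \<subseteq> E\<^sup>*"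
      unfolding E_def by (rule rtrancl_mono) auto
    ultimately show ?thesis by blast
  qed
  have "(c, x) \<in> E" "(x, c) \<in> E" using x adjacent_sym unfolding E_def by auto
  then have to_x: "(u, x) \<in> E\<^sup>* \<and> (x, u) \<in> E\<^sup>*" if "u \<in> insert c T" for u
    using that old[OF _ x(1)] old[OF x(1)] by (cases "u = c") auto
  show ?thesis
    unfolding connected_pts_def E_def[symmetric]
  proof (intro ballI)
    fix u v assume "u \<in> insert c T" "v \<in> insert c T"
    then show "(u, v) \<in> E\<^sup>*" using to_x rtrancl_trans by metis
  qed
qed

text \<open>The points of T are the edges of a spanning tree of the complete bipartite graph with
  vertex classes R and C.\<close>
definition spanning_tree_on :: "nat set \<Rightarrow> nat set \<Rightarrow> (nat \<times> nat) set \<Rightarrow> bool" where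
  "spanning_tree_on R C T \<longleftrightarrow> finite T \<and> fst ` T = R \<and> snd ` T = C \<and> peelable T
     \<and> connected_pts T \<and> card T + 1 = card R + card C"

lemma spanning_tree_on_insert_row:
  assumes T: "spanning_tree_on R C T" and "i \<notin> R" "j \<in> C"
  shows "spanning_tree_on (insert i R) C (insert (i, j) T)"
proof -
  have fin: "finite T" and R: "fst ` T = R" and C: "snd ` T = C" and "peelable T"
    and "connected_pts T" and card: "card T + 1 = card R + card C"
    using T unfolding spanning_tree_on_def by auto
  obtain i' where i': "(i', j) \<in> T" using C \<open>j \<in> C\<close> by (metis imageE prod.collapse)
  have new: "i \<notin> fst ` T" using R \<open>i \<notin> R\<close> by simp
  then have "adjacent (i, j) (i', j)" using i' unfolding adjacent_def by force
  then have "connected_pts (insert (i, j) T)"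
    using connected_pts_insert[OF \<open>connected_pts T\<close> i'] by blast
  moreover have "peelable (insert (i, j) T)"
    using peelable_insert_new_row[OF \<open>peelable T\<close> new] .
  moreover have "(i, j) \<notin> T" using new by force
  moreover have "finite R" using R fin by blast
  ultimately show ?thesis
    using fin R C card \<open>i \<notin> R\<close> \<open>j \<in> C\<close> unfolding spanning_tree_on_def
    by (simp add: insert_absorb)
qed

lemma spanning_tree_on_insert_col:
  assumes T: "spanning_tree_on R C T" and "j \<notin> C" "i \<in> R"
  shows "spanning_tree_on R (insert j C) (insert (i, j) T)"
proof -
  have fin: "finite T" and R: "fst ` T = R" and C: "snd ` T = C" and "peelable T"
    and "connected_pts T" and card: "card T + 1 = card R + card C"
    using T unfolding spanning_tree_on_def by auto
  obtain j' where j': "(i, j') \<in> T" using R \<open>i \<in> R\<close> by (metis imageE prod.collapse)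
  have new: "j \<notin> snd ` T" using C \<open>j \<notin> C\<close> by simp
  then have "adjacent (i, j) (i, j')" using j' unfolding adjacent_def by force
  then have "connected_pts (insert (i, j) T)"
    using connected_pts_insert[OF \<open>connected_pts T\<close> j'] by blast
  moreover have "peelable (insert (i, j) T)"
    using peelable_insert_new_col[OF \<open>peelable T\<close> new] .
  moreover have "(i, j) \<notin> T" using new by force
  moreover have "finite C" using C fin by blast
  ultimately show ?thesis
    using fin R C card \<open>j \<notin> C\<close> \<open>i \<in> R\<close> unfolding spanning_tree_on_def
    by (simp add: insert_absorb)
qed

lemma peelable_has_sparse_line:
  assumes "S \<subseteq> R \<times> C" "peelable S" "R \<noteq> {}"
  shows "(\<exists>i\<in>R. \<forall>c\<in>S. \<forall>c'\<in>S. fst c = i \<longrightarrow> fst c' = i \<longrightarrow> c = c')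
    \<or> (\<exists>j\<in>C. \<forall>c\<in>S. \<forall>c'\<in>S. snd c = j \<longrightarrow> snd c' = j \<longrightarrow> c = c')"
proof (rule ccontr)
  assume "\<not> ?thesis"
  then have rows: "\<forall>i\<in>R. \<exists>c\<in>S. \<exists>c'\<in>S. fst c = i \<and> fst c' = i \<and> c \<noteq> c'"
    and cols: "\<forall>j\<in>C. \<exists>c\<in>S. \<exists>c'\<in>S. snd c = j \<and> snd c' = j \<and> c \<noteq> c'"
    by auto
  have "mated S" unfolding mated_def
  proof
    fix c assume "c \<in> S"
    then have "fst c \<in> R" "snd c \<in> C" using assms(1) by auto
    then show "(\<exists>c'\<in>S. c' \<noteq> c \<and> fst c' = fst c) \<and> (\<exists>c'\<in>S. c' \<noteq> c \<and> snd c' = snd c)"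
      using rows cols by metis
  qed
  moreover have "S \<noteq> {}" using rows assms(3) by blast
  ultimately show False using assms(2) unfolding peelable_def by blast
qed

lemma spanning_tree_extension_cases:
  assumes "finite R" "finite C" "R \<noteq> {}" "C \<noteq> {}" "S \<subseteq> R \<times> C" "peelable S"
  obtains "card R = 1" "card C = 1"
    | i where "i \<in> R" "2 \<le> card R" "\<forall>c\<in>S. \<forall>c'\<in>S. fst c = i \<longrightarrow> fst c' = i \<longrightarrow> c = c'"
    | j where "j \<in> C" "2 \<le> card C" "\<forall>c\<in>S. \<forall>c'\<in>S. snd c = j \<longrightarrow> snd c' = j \<longrightarrow> c = c'"
proof -
  have "card R \<noteq> 0" "card C \<noteq> 0" using assms(1-4) by simp_all
  then consider "card R = 1" "card C = 1" | "card R = 1" "2 \<le> card C"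
    | "2 \<le> card R" "card C = 1" | "2 \<le> card R" "2 \<le> card C" by linarith
  then show thesis
  proof cases
    case 1
    then show thesis by (rule that(1))
  next
    case 2
    then obtain i where "R = {i}" by (auto simp: card_1_singleton_iff)
    obtain j where "j \<in> C" using assms(4) by blast
    moreover have "\<forall>c\<in>S. \<forall>c'\<in>S. snd c = j \<longrightarrow> snd c' = j \<longrightarrow> c = c'"
    proof -
      have "fst c = i" if "c \<in> S" for c using that assms(5) \<open>R = {i}\<close> by auto
      then show ?thesis by (simp add: prod_eq_iff)
    qed
    ultimately show thesis using that(3) 2(2) by simp
  next
    case 3
    then obtain j where "C = {j}" by (auto simp: card_1_singleton_iff)
    obtain i where "i \<in> R" using assms(3) by blast
    moreover have "\<forall>c\<in>S. \<forall>c'\<in>S. fst c = i \<longrightarrow> fst c' = i \<longrightarrow> c = c'"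
    proof -
      have "snd c = j" if "c \<in> S" for c using that assms(5) \<open>C = {j}\<close> by auto
      then show ?thesis by (simp add: prod_eq_iff)
    qed
    ultimately show thesis using that(2) 3(1) by simp
  next
    case 4
    from peelable_has_sparse_line[OF assms(5,6,3)] show thesis
    proof (elim disjE bexE)
      fix i assume "i \<in> R" "\<forall>c\<in>S. \<forall>c'\<in>S. fst c = i \<longrightarrow> fst c' = i \<longrightarrow> c = c'"
      then show thesis using that(2) 4(1) by simp
    next
      fix j assume "j \<in> C" "\<forall>c\<in>S. \<forall>c'\<in>S. snd c = j \<longrightarrow> snd c' = j \<longrightarrow> c = c'"
      then show thesis using that(3) 4(2) by simp
    qed
  qed
qed

lemma spanning_tree_extend_row:
  assumes "S \<subseteq> R \<times> C" "C \<noteq> {}" "i \<in> R"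
    and sparse: "\<forall>c\<in>S. \<forall>c'\<in>S. fst c = i \<longrightarrow> fst c' = i \<longrightarrow> c = c'"
    and T: "S - {c. fst c = i} \<subseteq> T" "spanning_tree_on (R - {i}) C T"
  shows "\<exists>T'. S \<subseteq> T' \<and> spanning_tree_on R C T'"
proof -
  obtain j where j: "j \<in> C" "\<forall>c\<in>S. fst c = i \<longrightarrow> c = (i, j)"
  proof (cases "\<exists>c\<in>S. fst c = i")
    case True
    then obtain c where c: "c \<in> S" "fst c = i" by blast
    then have "snd c \<in> C" using assms(1) by auto
    moreover have "\<forall>c'\<in>S. fst c' = i \<longrightarrow> c' = (i, snd c)" using sparse c by (metis prod.collapse)
    ultimately show ?thesis by (rule that)
  next
    case False
    then show ?thesis using that assms(2) by blast
  qed
  have "i \<notin> R - {i}" by simp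
  from spanning_tree_on_insert_row[OF T(2) this j(1)]
  have "spanning_tree_on R C (insert (i, j) T)" using assms(3) by (simp add: insert_absorb)
  moreover have "S \<subseteq> insert (i, j) T" using T(1) j(2) by auto
  ultimately show ?thesis by blast
qed

lemma spanning_tree_extend_col:
  assumes "S \<subseteq> R \<times> C" "R \<noteq> {}" "j \<in> C"
    and sparse: "\<forall>c\<in>S. \<forall>c'\<in>S. snd c = j \<longrightarrow> snd c' = j \<longrightarrow> c = c'"
    and T: "S - {c. snd c = j} \<subseteq> T" "spanning_tree_on R (C - {j}) T"
  shows "\<exists>T'. S \<subseteq> T' \<and> spanning_tree_on R C T'"
proof -
  obtain i where i: "i \<in> R" "\<forall>c\<in>S. snd c = j \<longrightarrow> c = (i, j)"
  proof (cases "\<exists>c\<in>S. snd c = j")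
    case True
    then obtain c where c: "c \<in> S" "snd c = j" by blast
    then have "fst c \<in> R" using assms(1) by auto
    moreover have "\<forall>c'\<in>S. snd c' = j \<longrightarrow> c' = (fst c, j)" using sparse c by (metis prod.collapse)
    ultimately show ?thesis by (rule that)
  next
    case False
    then show ?thesis using that assms(2) by blast
  qed
  have "j \<notin> C - {j}" by simp
  from spanning_tree_on_insert_col[OF T(2) this i(1)]
  have "spanning_tree_on R C (insert (i, j) T)" using assms(3) by (simp add: insert_absorb)
  moreover have "S \<subseteq> insert (i, j) T" using T(1) i(2) by auto
  ultimately show ?thesis by blast
qed

lemma peelable_extends_to_spanning_tree:
  assumes "finite R" "finite C" "R \<noteq> {}" "C \<noteq> {}" "S \<subseteq> R \<times> C" "peelable S"
  shows "\<exists>T. S \<subseteq> T \<and> spanning_tree_on R C T"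
  using assms
proof (induction "card R + card C" arbitrary: R C S rule: less_induct)
  case less
  from spanning_tree_extension_cases[OF less.prems] show ?case
  proof cases
    case 1
    then obtain i j where "R = {i}" "C = {j}" by (auto simp: card_1_singleton_iff)
    then have "S \<subseteq> {(i, j)}" "spanning_tree_on R C {(i, j)}"
      using less.prems(5) peelable_singleton connected_pts_singleton
      unfolding spanning_tree_on_def by auto
    then show ?thesis by blast
  next
    case (2 i)
    have "card (R - {i}) = card R - 1" using 2(1) less.prems(1) by simp
    then have "card (R - {i}) + card C < card R + card C" "0 < card (R - {i})"
      using 2(2) by simp_all
    then have "card (R - {i}) + card C < card R + card C" "R - {i} \<noteq> {}"
      using card_gt_0_iff by blast+
    moreover have "S - {c. fst c = i} \<subseteq> (R - {i}) \<times> C" using less.prems(5) by auto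
    moreover have "peelable (S - {c. fst c = i})" using peelable_subset[OF less.prems(6)] by blast
    ultimately have "\<exists>T. S - {c. fst c = i} \<subseteq> T \<and> spanning_tree_on (R - {i}) C T"
      using less.prems(1,2,4) by (intro less.hyps) auto
    then show ?thesis using spanning_tree_extend_row[OF less.prems(5,4) 2(1,3)] by blast
  next
    case (3 j)
    have "card (C - {j}) = card C - 1" using 3(1) less.prems(2) by simp
    then have "card R + card (C - {j}) < card R + card C" "0 < card (C - {j})"
      using 3(2) by simp_all
    then have "card R + card (C - {j}) < card R + card C" "C - {j} \<noteq> {}"
      using card_gt_0_iff by blast+
    moreover have "S - {c. snd c = j} \<subseteq> R \<times> (C - {j})" using less.prems(5) by auto
    moreover have "peelable (S - {c. snd c = j})" using peelable_subset[OF less.prems(6)] by blast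
    ultimately have "\<exists>T. S - {c. snd c = j} \<subseteq> T \<and> spanning_tree_on R (C - {j}) T"
      using less.prems(1,2,3) by (intro less.hyps) auto
    then show ?thesis using spanning_tree_extend_col[OF less.prems(5,3) 3(1,3)] by blast
  qed
qed

section \<open>Extreme points of the transport polytope\<close>

lemma transport_polytopeD:
  assumes "P \<in> transport_polytope m n p q"
  shows "m \<le> i \<or> n \<le> j \<Longrightarrow> P i j = 0" and "i < m \<Longrightarrow> j < n \<Longrightarrow> 0 \<le> P i j"
    and "i < m \<Longrightarrow> (\<Sum>j<n. P i j) = p i" and "j < n \<Longrightarrow> (\<Sum>i<m. P i j) = q j"
  using assms unfolding transport_polytope_def by auto

lemma support_pos: "P \<in> transport_polytope m n p q \<Longrightarrow> (i, j) \<in> support m n P \<Longrightarrow> 0 < P i j"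
  using transport_polytopeD(2)[of P m n p q i j] unfolding support_def by force

lemma support_subset: "support m n P \<subseteq> {..<m} \<times> {..<n}"
  unfolding support_def by auto

definition unit_circulation :: "nat \<Rightarrow> nat \<Rightarrow> (nat \<times> nat) set \<Rightarrow> (nat \<Rightarrow> nat \<Rightarrow> real) \<Rightarrow> bool" where
  "unit_circulation m n Y d \<longleftrightarrow>
     (\<forall>i<m. (\<Sum>j<n. d i j) = 0) \<and> (\<forall>j<n. (\<Sum>i<m. d i j) = 0) \<and>
     (\<forall>i j. d i j \<noteq> 0 \<longrightarrow> (i, j) \<in> Y \<and> \<bar>d i j\<bar> = 1) \<and> (\<exists>i j. d i j = 1)"

lemma unit_circulationD:
  assumes "unit_circulation m n Y d"
  shows "i < m \<Longrightarrow> (\<Sum>j<n. d i j) = 0" and "j < n \<Longrightarrow> (\<Sum>i<m. d i j) = 0"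
    and "d i j \<noteq> 0 \<Longrightarrow> (i, j) \<in> Y" and "d i j \<noteq> 0 \<Longrightarrow> \<bar>d i j\<bar> = 1"
  using assms unfolding unit_circulation_def by blast+

lemma card_row_image:
  assumes "inj_on g A" "\<forall>t\<in>A. snd (g t) < n"
  shows "card {j\<in>{..<n}. (i, j) \<in> g ` A} = card {t\<in>A. fst (g t) = i}"
proof -
  have "{j\<in>{..<n}. (i, j) \<in> g ` A} = (\<lambda>t. snd (g t)) ` {t\<in>A. fst (g t) = i}"
    using assms(2) by (force simp: image_iff prod_eq_iff)
  moreover have "inj_on (\<lambda>t. snd (g t)) {t\<in>A. fst (g t) = i}"
    using assms(1) by (auto simp: inj_on_def prod_eq_iff)
  ultimately show ?thesis by (simp add: card_image)
qed

lemma card_col_image: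
  assumes "inj_on g A" "\<forall>t\<in>A. fst (g t) < m"
  shows "card {i\<in>{..<m}. (i, j) \<in> g ` A} = card {t\<in>A. snd (g t) = j}"
proof -
  have "{i\<in>{..<m}. (i, j) \<in> g ` A} = (\<lambda>t. fst (g t)) ` {t\<in>A. snd (g t) = j}"
    using assms(2) by (force simp: image_iff prod_eq_iff)
  moreover have "inj_on (\<lambda>t. fst (g t)) {t\<in>A. snd (g t) = j}"
    using assms(1) by (auto simp: inj_on_def prod_eq_iff)
  ultimately show ?thesis by (simp add: card_image)
qed

lemma card_filter_Suc_mod:
  assumes "0 < M"
  shows "card {t\<in>{..<M}. Q (Suc t mod M)} = card {t\<in>{..<M}. Q t}"
proof -
  have inj: "inj_on (\<lambda>t. Suc t mod M) {..<M}"
  proof (rule inj_onI)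
    fix a b assume "a \<in> {..<M}" "b \<in> {..<M}" "Suc a mod M = Suc b mod M"
    moreover have "Suc t mod M = (if Suc t = M then 0 else Suc t)" if "t < M" for t
      using that by (simp add: mod_Suc)
    ultimately show "a = b" by (simp split: if_splits)
  qed
  then have onto: "(\<lambda>t. Suc t mod M) ` {..<M} = {..<M}" using assms by (intro endo_inj_surj) auto
  have "(\<lambda>t. Suc t mod M) ` {t\<in>{..<M}. Q (Suc t mod M)} = {t\<in>{..<M}. Q t}"
  proof
    show "(\<lambda>t. Suc t mod M) ` {t\<in>{..<M}. Q (Suc t mod M)} \<subseteq> {t\<in>{..<M}. Q t}"
      using assms by auto
    show "{t\<in>{..<M}. Q t} \<subseteq> (\<lambda>t. Suc t mod M) ` {t\<in>{..<M}. Q (Suc t mod M)}"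
    proof
      fix x assume x: "x \<in> {t\<in>{..<M}. Q t}"
      then have "x \<in> (\<lambda>t. Suc t mod M) ` {..<M}" using onto by simp
      then obtain t where "t \<in> {..<M}" "x = Suc t mod M" by (rule imageE)
      then show "x \<in> (\<lambda>t. Suc t mod M) ` {t\<in>{..<M}. Q (Suc t mod M)}"
        using x by (intro image_eqI[of _ _ t]) simp_all
    qed
  qed
  moreover have "inj_on (\<lambda>t. Suc t mod M) {t\<in>{..<M}. Q (Suc t mod M)}"
    using inj by (rule inj_on_subset) auto
  ultimately show ?thesis
    using card_image[of "\<lambda>t. Suc t mod M" "{t\<in>{..<M}. Q (Suc t mod M)}"] by simp
qed

lemma alternating_cycle_cells_disjoint:
  assumes "alternating_cycle Y M r k" "a < M" "b < M"
  shows "(r a, k a) \<noteq> (r b, k (Suc b mod M))"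
proof
  have M: "2 \<le> M" and r: "inj_on r {..<M}" and k: "inj_on k {..<M}"
    using assms(1) unfolding alternating_cycle_def by auto
  assume "(r a, k a) = (r b, k (Suc b mod M))"
  then have "a = b" "k a = k (Suc a mod M)" using r assms(2,3) by (auto dest: inj_onD)
  moreover have "Suc a mod M < M" using M by simp
  ultimately have "Suc a mod M = a" using k assms(2) by (auto dest: inj_onD)
  then show False using Suc_mod_neq_self[OF M assms(2)] by simp
qed

text \<open>The signed indicator of the cells (r t, k t) and (r t, k (t + 1)) of an alternating cycle.\<close>
lemma unit_circulation_of_alternating_cycle:
  assumes C: "alternating_cycle Y M r k" and Y: "Y \<subseteq> {..<m} \<times> {..<n}"
  shows "\<exists>d. unit_circulation m n Y d"
proof -
  have M: "2 \<le> M" and r: "inj_on r {..<M}"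
    and inY: "\<And>t. t < M \<Longrightarrow> (r t, k t) \<in> Y \<and> (r t, k (Suc t mod M)) \<in> Y"
    using C unfolding alternating_cycle_def by auto
  define plus where "plus t = (r t, k t)" for t
  define minus where "minus t = (r t, k (Suc t mod M))" for t
  define d :: "nat \<Rightarrow> nat \<Rightarrow> real"
    where "d i j = of_bool ((i, j) \<in> plus ` {..<M}) - of_bool ((i, j) \<in> minus ` {..<M})"
    for i j
  have inj: "inj_on plus {..<M}" "inj_on minus {..<M}"
    using r by (auto simp: inj_on_def plus_def minus_def dest: inj_onD)
  have in_Y: "plus ` {..<M} \<subseteq> Y" "minus ` {..<M} \<subseteq> Y"
    using inY unfolding plus_def minus_def by auto
  then have box: "\<forall>t\<in>{..<M}. fst (plus t) < m \<and> snd (plus t) < n \<and> fst (minus t) < m \<and> snd (minus t) < n"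
    using Y by fastforce
  have disjoint: "plus a \<noteq> minus b" if "a < M" "b < M" for a b
    using alternating_cycle_cells_disjoint[OF C that] by (simp add: plus_def minus_def)
  have "(\<Sum>j<n. d i j) = 0" for i
    using card_row_image[OF inj(1), of n i] card_row_image[OF inj(2), of n i] box
    by (simp add: d_def sum_subtractf plus_def minus_def Int_def)
  moreover have "(\<Sum>i<m. d i j) = 0" for j
    using card_col_image[OF inj(1), of m j] card_col_image[OF inj(2), of m j] box
      card_filter_Suc_mod[of M "\<lambda>t. k t = j"] M
    by (simp add: d_def sum_subtractf plus_def minus_def Int_def)
  moreover have "(i, j) \<in> Y \<and> \<bar>d i j\<bar> = 1" if "d i j \<noteq> 0" for i j
    using that in_Y disjoint by (auto simp: d_def)
  moreover have "d (r 0) (k 0) = 1"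
    using disjoint M by (auto simp: d_def plus_def[symmetric])
  ultimately show ?thesis unfolding unit_circulation_def by blast
qed

lemma unit_circulation_of_not_peelable:
  assumes "Y \<subseteq> {..<m} \<times> {..<n}" "\<not> peelable Y"
  shows "\<exists>d. unit_circulation m n Y d"
proof -
  obtain Z where Z: "Z \<subseteq> Y" "Z \<noteq> {}" "mated Z" using assms(2) unfolding peelable_def by blast
  moreover have "finite Z" using finite_subset[OF subset_trans[OF Z(1) assms(1)]] by simp
  ultimately obtain M r k where "alternating_cycle Z M r k"
    using mated_imp_alternating_cycle by blast
  then have "alternating_cycle Y M r k" using alternating_cycle_mono Z(1) by blast
  then show ?thesis using unit_circulation_of_alternating_cycle assms(1) by blast
qed

lemma transport_polytope_add_circulation:
  assumes P: "P \<in> transport_polytope m n p q" and d: "unit_circulation m n (support m n P) d"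
    and nonneg: "\<And>i j. i < m \<Longrightarrow> j < n \<Longrightarrow> 0 \<le> P i j + s * d i j"
  shows "(\<lambda>i j. P i j + s * d i j) \<in> transport_polytope m n p q"
  unfolding transport_polytope_def
proof (intro CollectI conjI allI impI)
  fix i j assume out: "m \<le> i \<or> n \<le> j"
  then have "(i, j) \<notin> support m n P" unfolding support_def by auto
  then have "d i j = 0" using unit_circulationD(3)[OF d] by blast
  then show "P i j + s * d i j = 0" using transport_polytopeD(1)[OF P out] by simp
next
  fix i j assume "i < m" "j < n"
  then show "0 \<le> P i j + s * d i j" by (rule nonneg)
next
  fix i assume "i < m"
  then show "(\<Sum>j<n. P i j + s * d i j) = p i"
    using unit_circulationD(1)[OF d] transport_polytopeD(3)[OF P]
    by (simp add: sum.distrib flip: sum_distrib_left)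
next
  fix j assume "j < n"
  then show "(\<Sum>i<m. P i j + s * d i j) = q j"
    using unit_circulationD(2)[OF d] transport_polytopeD(4)[OF P]
    by (simp add: sum.distrib flip: sum_distrib_left)
qed

lemma transport_polytope_small_circulation:
  assumes P: "P \<in> transport_polytope m n p q" and d: "unit_circulation m n (support m n P) d"
  shows "\<exists>e>0. \<forall>s. \<bar>s\<bar> \<le> e \<longrightarrow> (\<lambda>i j. P i j + s * d i j) \<in> transport_polytope m n p q"
proof -
  define D where "D = {c \<in> {..<m} \<times> {..<n}. d (fst c) (snd c) \<noteq> 0}"
  have dD: "(i, j) \<in> support m n P \<and> \<bar>d i j\<bar> = 1" if "(i, j) \<in> D" for i j
    using that unit_circulationD(3,4)[OF d] unfolding D_def by auto
  obtain i0 j0 where "d i0 j0 = 1" using d unfolding unit_circulation_def by blast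
  then have "(i0, j0) \<in> support m n P" using unit_circulationD(3)[OF d] by simp
  then have "(i0, j0) \<in> D" using \<open>d i0 j0 = 1\<close> unfolding D_def support_def by simp
  define e where "e = Min ((\<lambda>c. P (fst c) (snd c)) ` D)"
  have "finite D" unfolding D_def by simp
  have e_le: "e \<le> P i j" if "(i, j) \<in> D" for i j
  proof -
    have "P i j \<in> (\<lambda>c. P (fst c) (snd c)) ` D" using that by (rule image_eqI[rotated]) simp
    then show ?thesis unfolding e_def using \<open>finite D\<close> by (intro Min_le) simp_all
  qed
  have "e \<in> (\<lambda>c. P (fst c) (snd c)) ` D"
    unfolding e_def using \<open>finite D\<close> \<open>(i0, j0) \<in> D\<close> by (intro Min_in) auto
  then obtain c where "c \<in> D" "e = P (fst c) (snd c)" by blast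
  then have "0 < e" using dD[of "fst c" "snd c"] support_pos[OF P] by simp
  moreover have "(\<lambda>i j. P i j + s * d i j) \<in> transport_polytope m n p q" if "\<bar>s\<bar> \<le> e" for s
  proof (rule transport_polytope_add_circulation[OF P d])
    fix i j assume ij: "i < m" "j < n"
    show "0 \<le> P i j + s * d i j"
    proof (cases "(i, j) \<in> D")
      case True
      then have "\<bar>s * d i j\<bar> \<le> P i j" using dD[OF True] e_le[OF True] that by (simp add: abs_mult)
      then show ?thesis by linarith
    next
      case False
      then show ?thesis using ij transport_polytopeD(2)[OF P] unfolding D_def by simp
    qed
  qed
  ultimately show ?thesis by blast
qed

lemma not_peelable_imp_midpoint:
  assumes P: "P \<in> transport_polytope m n p q" and "\<not> peelable (support m n P)"
  obtains A B i j where "A \<in> transport_polytope m n p q" "B \<in> transport_polytope m n p q"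
    "P = (\<lambda>i j. (A i j + B i j) / 2)" "i < m" "j < n" "A i j \<noteq> B i j"
proof -
  obtain d where d: "unit_circulation m n (support m n P) d"
    using unit_circulation_of_not_peelable[OF support_subset assms(2)] by blast
  obtain e where e: "0 < e" "\<forall>s. \<bar>s\<bar> \<le> e \<longrightarrow> (\<lambda>i j. P i j + s * d i j) \<in> transport_polytope m n p q"
    using transport_polytope_small_circulation[OF P d] by blast
  define A where "A = (\<lambda>i j. P i j + e * d i j)"
  define B where "B = (\<lambda>i j. P i j + (- e) * d i j)"
  obtain i j where "d i j = 1" using d unfolding unit_circulation_def by blast
  moreover have "(i, j) \<in> support m n P" using unit_circulationD(3)[OF d] calculation by simp
  ultimately have ij: "i < m" "j < n" and AB: "A i j \<noteq> B i j"
    using e(1) unfolding support_def by (simp_all add: A_def B_def)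
  have "A \<in> transport_polytope m n p q"
    using e(2)[rule_format, of e] e(1) by (simp add: A_def)
  moreover have "B \<in> transport_polytope m n p q"
    using e(2)[rule_format, of "- e"] e(1) by (simp add: B_def)
  moreover have "P = (\<lambda>i j. (A i j + B i j) / 2)" by (simp add: A_def B_def)
  ultimately show thesis using ij AB by (rule that)
qed

lemma not_peelable_imp_not_extreme:
  assumes "P \<in> transport_polytope m n p q" "\<not> peelable (support m n P)"
  shows "P \<notin> extreme_points_of (transport_polytope m n p q)"
proof -
  obtain A B i j where A: "A \<in> transport_polytope m n p q" and B: "B \<in> transport_polytope m n p q"
    and P: "P = (\<lambda>i j. (A i j + B i j) / 2)" and "i < m" "j < n" and "A i j \<noteq> B i j"
    by (rule not_peelable_imp_midpoint[OF assms])
  then have "A \<noteq> B" by auto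
  moreover have "\<exists>t::real. 0 < t \<and> t < 1 \<and> P = (\<lambda>i j. t * A i j + (1 - t) * B i j)"
    using P by (intro exI[of _ "1 / 2"]) (simp add: field_simps)
  ultimately show ?thesis using A B unfolding extreme_points_of_def by blast
qed

text \<open>Moving against the circulation until the smallest entry carrying +1 vanishes.\<close>
lemma not_peelable_imp_smaller_support:
  assumes P: "P \<in> transport_polytope m n p q" and "\<not> peelable (support m n P)"
  shows "\<exists>Q\<in>transport_polytope m n p q. support m n Q \<subset> support m n P"
proof -
  obtain d where d: "unit_circulation m n (support m n P) d"
    using unit_circulation_of_not_peelable[OF support_subset assms(2)] by blast
  define D where "D = {c \<in> {..<m} \<times> {..<n}. d (fst c) (snd c) = 1}"
  obtain i j where "d i j = 1" using d unfolding unit_circulation_def by blast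
  then have "(i, j) \<in> D" using unit_circulationD(3)[OF d, of i j] unfolding D_def support_def by simp
  then have "D \<noteq> {}" "finite D" unfolding D_def by auto
  then obtain c where c: "c \<in> D" "\<forall>c'\<in>D. P (fst c) (snd c) \<le> P (fst c') (snd c')"
    using ex_min_if_finite[of "(\<lambda>c. P (fst c) (snd c)) ` D"] by force
  define i0 where "i0 = fst c"
  define j0 where "j0 = snd c"
  define e where "e = P i0 j0"
  have ij0: "i0 < m" "j0 < n" "d i0 j0 = 1" using c(1) unfolding D_def i0_def j0_def by auto
  have e_le: "e \<le> P i j" if "i < m" "j < n" "d i j = 1" for i j
    using c(2) that unfolding D_def e_def i0_def j0_def by force
  have "0 < e" using support_pos[OF P] unit_circulationD(3)[OF d, of i0 j0] ij0 by (simp add: e_def)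
  define Q where "Q = (\<lambda>i j. P i j + (- e) * d i j)"
  have "Q \<in> transport_polytope m n p q"
    unfolding Q_def
  proof (rule transport_polytope_add_circulation[OF P d])
    fix i j assume ij: "i < m" "j < n"
    show "0 \<le> P i j + - e * d i j"
    proof (cases "d i j = 0")
      case True
      then show ?thesis using transport_polytopeD(2)[OF P ij] by simp
    next
      case False
      then have "d i j = 1 \<or> d i j = -1" using unit_circulationD(4)[OF d, of i j] by fastforce
      then show ?thesis using e_le[OF ij] transport_polytopeD(2)[OF P ij] \<open>0 < e\<close> by auto
    qed
  qed
  moreover have "support m n Q \<subseteq> support m n P"
    using unit_circulationD(3)[OF d] unfolding support_def Q_def by fastforce
  moreover have "(i0, j0) \<in> support m n P - support m n Q"
    using ij0 \<open>0 < e\<close> unfolding support_def Q_def e_def by simp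
  ultimately show ?thesis by blast
qed

lemma sum_lessThan_eq_single:
  fixes f :: "nat \<Rightarrow> 'a::comm_monoid_add"
  assumes "j0 < n" "\<And>j. j < n \<Longrightarrow> j \<noteq> j0 \<Longrightarrow> f j = 0"
  shows "(\<Sum>j<n. f j) = f j0"
proof -
  have "(\<Sum>j<n. f j) = f j0 + (\<Sum>j\<in>{..<n} - {j0}. f j)"
    using assms(1) by (simp add: sum.remove)
  also have "(\<Sum>j\<in>{..<n} - {j0}. f j) = 0" using assms(2) by (intro sum.neutral) auto
  finally show ?thesis by simp
qed

lemma transport_polytope_row_determined:
  assumes "a \<in> transport_polytope m n p q" "b \<in> transport_polytope m n p q" "i < m" "j0 < n"
    and "\<And>j. j < n \<Longrightarrow> j \<noteq> j0 \<Longrightarrow> a i j = b i j"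
  shows "a i j0 = b i j0"
proof -
  have "(\<Sum>j<n. a i j - b i j) = 0"
    using transport_polytopeD(3)[OF assms(1,3)] transport_polytopeD(3)[OF assms(2,3)]
    by (simp add: sum_subtractf)
  moreover have "(\<Sum>j<n. a i j - b i j) = a i j0 - b i j0"
    using assms(4,5) by (intro sum_lessThan_eq_single) auto
  ultimately show ?thesis by simp
qed

lemma transport_polytope_col_determined:
  assumes "a \<in> transport_polytope m n p q" "b \<in> transport_polytope m n p q" "j < n" "i0 < m"
    and "\<And>i. i < m \<Longrightarrow> i \<noteq> i0 \<Longrightarrow> a i j = b i j"
  shows "a i0 j = b i0 j"
proof -
  have "(\<Sum>i<m. a i j - b i j) = 0"
    using transport_polytopeD(4)[OF assms(1,3)] transport_polytopeD(4)[OF assms(2,3)]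
    by (simp add: sum_subtractf)
  moreover have "(\<Sum>i<m. a i j - b i j) = a i0 j - b i0 j"
    using assms(4,5) by (intro sum_lessThan_eq_single) auto
  ultimately show ?thesis by simp
qed

lemma transport_polytope_difference_mated:
  assumes "a \<in> transport_polytope m n p q" "b \<in> transport_polytope m n p q"
  shows "mated {(i, j). i < m \<and> j < n \<and> a i j \<noteq> b i j}" (is "mated ?X")
  unfolding mated_def
proof (intro ballI conjI)
  fix c assume "c \<in> ?X"
  then obtain i0 j0 where c: "c = (i0, j0)" "i0 < m" "j0 < n" "a i0 j0 \<noteq> b i0 j0" by auto
  show "\<exists>c'\<in>?X. c' \<noteq> c \<and> fst c' = fst c"
  proof (rule ccontr)
    assume "\<not> ?thesis"
    then have "a i0 j = b i0 j" if "j < n" "j \<noteq> j0" for j using that c by auto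
    then show False using transport_polytope_row_determined[OF assms c(2,3)] c(4) by blast
  qed
  show "\<exists>c'\<in>?X. c' \<noteq> c \<and> snd c' = snd c"
  proof (rule ccontr)
    assume "\<not> ?thesis"
    then have "a i j0 = b i j0" if "i < m" "i \<noteq> i0" for i using that c by auto
    then show False using transport_polytope_col_determined[OF assms c(3,2)] c(4) by blast
  qed
qed

lemma peelable_imp_extreme:
  assumes P: "P \<in> transport_polytope m n p q" and "peelable (support m n P)"
  shows "P \<in> extreme_points_of (transport_polytope m n p q)"
  unfolding extreme_points_of_def
proof (intro CollectI conjI notI)
  show "P \<in> transport_polytope m n p q" by (rule P)
  assume "\<exists>a\<in>transport_polytope m n p q. \<exists>b\<in>transport_polytope m n p q. a \<noteq> b \<and>
    (\<exists>t::real. 0 < t \<and> t < 1 \<and> P = (\<lambda>i j. t * a i j + (1 - t) * b i j))"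
  then obtain a b t where a: "a \<in> transport_polytope m n p q" and b: "b \<in> transport_polytope m n p q"
    and "a \<noteq> b" and t: "0 < t" "t < 1" and P_eq: "P = (\<lambda>i j. t * a i j + (1 - t) * b i j)"
    by blast
  define X where "X = {(i, j). i < m \<and> j < n \<and> a i j \<noteq> b i j}"
  have "X \<subseteq> support m n P"
  proof
    fix c assume "c \<in> X"
    then obtain i j where c: "c = (i, j)" "i < m" "j < n" "a i j \<noteq> b i j" unfolding X_def by auto
    have "0 \<le> a i j" "0 \<le> b i j" using transport_polytopeD(2) a b c(2,3) by auto
    then have "P i j \<noteq> 0" using t c(4) unfolding P_eq
      by (smt (verit) mult_nonneg_nonneg mult_pos_pos)
    then show "c \<in> support m n P" using c unfolding support_def by simp
  qed
  moreover have "X \<noteq> {}"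
  proof
    assume "X = {}"
    then have "a i j = b i j" for i j
      using transport_polytopeD(1)[OF a] transport_polytopeD(1)[OF b] unfolding X_def
      by (cases "i < m \<and> j < n") auto
    then show False using \<open>a \<noteq> b\<close> by blast
  qed
  ultimately show False
    using assms(2) transport_polytope_difference_mated[OF a b] unfolding peelable_def X_def by blast
qed

theorem extreme_points_transport_polytope:
  "extreme_points_of (transport_polytope m n p q) =
     {P \<in> transport_polytope m n p q. peelable (support m n P)}"
proof (intro set_eqI iffI)
  fix P assume P: "P \<in> extreme_points_of (transport_polytope m n p q)"
  then have "P \<in> transport_polytope m n p q" unfolding extreme_points_of_def by blast
  then show "P \<in> {P \<in> transport_polytope m n p q. peelable (support m n P)}"
    using not_peelable_imp_not_extreme P by blast
qed (use peelable_imp_extreme in blast)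

lemma spanning_tree_on_is_tree: "spanning_tree_on R C T \<Longrightarrow> is_tree T"
  unfolding spanning_tree_on_def is_tree_def using peelable_iff_no_circuit by blast

theorem tree_polytope_eq_extreme_points:
  assumes "0 < m" "0 < n"
  shows "tree_polytope m n p q = extreme_points_of (transport_polytope m n p q)"
proof (intro set_eqI iffI)
  fix P assume "P \<in> tree_polytope m n p q"
  then obtain T where P: "P \<in> transport_polytope m n p q"
    and T: "T \<subseteq> {0..<m} \<times> {0..<n}" "is_tree T" "support m n P \<subseteq> T"
    unfolding tree_polytope_def by blast
  have "finite T" using finite_subset[OF T(1)] by simp
  then have "peelable T" using T(2) peelable_iff_no_circuit unfolding is_tree_def by blast
  then show "P \<in> extreme_points_of (transport_polytope m n p q)"
    using peelable_imp_extreme[OF P] peelable_subset T(3) by blast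
next
  fix P assume "P \<in> extreme_points_of (transport_polytope m n p q)"
  then have P: "P \<in> transport_polytope m n p q" "peelable (support m n P)"
    by (simp_all add: extreme_points_transport_polytope)
  obtain T where T: "support m n P \<subseteq> T" "spanning_tree_on {..<m} {..<n} T"
    using peelable_extends_to_spanning_tree[OF _ _ _ _ support_subset P(2)] assms by auto
  have "fst c < m \<and> snd c < n" if "c \<in> T" for c
    using T(2) that unfolding spanning_tree_on_def by (metis image_eqI lessThan_iff)
  then have "T \<subseteq> {0..<m} \<times> {0..<n}" by force
  moreover have "card T = m + n - 1" using T(2) unfolding spanning_tree_on_def by auto
  ultimately show "P \<in> tree_polytope m n p q"
    unfolding tree_polytope_def using P(1) T spanning_tree_on_is_tree by blast
qed

section \<open>Entropy minimisers\<close>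

lemma midpoint_less_of_deriv_antimono:
  fixes f f' :: "real \<Rightarrow> real"
  assumes "x < y" and cont: "continuous_on {x..y} f"
    and deriv: "\<And>z. x < z \<Longrightarrow> z < y \<Longrightarrow> (f has_real_derivative f' z) (at z)"
    and antimono: "\<And>u v. x < u \<Longrightarrow> u < v \<Longrightarrow> v < y \<Longrightarrow> f' v < f' u"
  shows "(f x + f y) / 2 < f ((x + y) / 2)"
proof -
  have mvt: "\<exists>z. a < z \<and> z < b \<and> f b - f a = (b - a) * f' z" if "x \<le> a" "a < b" "b \<le> y" for a b
  proof -
    have "continuous_on {a..b} f" using continuous_on_subset[OF cont] that by auto
    moreover have "f differentiable (at z)" if "a < z" "z < b" for z
      using deriv[of z] that \<open>x \<le> a\<close> \<open>b \<le> y\<close> real_differentiable_def by force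
    ultimately obtain l z where z: "a < z" "z < b" "(f has_real_derivative l) (at z)"
      "f b - f a = (b - a) * l"
      using MVT[OF \<open>a < b\<close>] by blast
    moreover have "l = f' z" using DERIV_unique[OF z(3) deriv] z that by simp
    ultimately show ?thesis by blast
  qed
  define c where "c = (x + y) / 2"
  have c: "x < c" "c < y" "y - c = c - x" "0 < c - x" using \<open>x < y\<close> by (simp_all add: c_def field_simps)
  obtain u where u: "x < u" "u < c" "f c - f x = (c - x) * f' u" using mvt[of x c] c by auto
  obtain v where v: "c < v" "v < y" "f y - f c = (c - x) * f' v" using mvt[of c y] c by auto
  have "f' v < f' u" using antimono u v by simp
  then have "(c - x) * f' v < (c - x) * f' u" using c(4) by simp
  then have "(f x + f y) / 2 < f c" using u(3) v(3) by simp
  then show ?thesis unfolding c_def .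
qed

lemma powr_midpoint_less:
  fixes x y a :: real
  assumes "0 \<le> x" "0 \<le> y" "x \<noteq> y" "0 < a" "a < 1"
  shows "(x powr a + y powr a) / 2 < ((x + y) / 2) powr a"
proof -
  have *: "(u powr a + v powr a) / 2 < ((u + v) / 2) powr a" if "0 \<le> u" "u < v" for u v
  proof (rule midpoint_less_of_deriv_antimono[where f' = "\<lambda>z. a * z powr (a - 1)"])
    show "continuous_on {u..v} (\<lambda>z. z powr a)"
      using that assms by (intro continuous_on_powr' continuous_on_id continuous_on_const) auto
    show "((\<lambda>z. z powr a) has_real_derivative a * z powr (a - 1)) (at z)" if "u < z" for z
      using that \<open>0 \<le> u\<close> by (intro has_real_derivative_powr) simp
    show "a * z' powr (a - 1) < a * z powr (a - 1)" if "u < z" "z < z'" for z z'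
      using that \<open>0 \<le> u\<close> assms powr_less_mono2_neg[of "a - 1" z z'] by simp
  qed (rule that(2))
  show ?thesis
  proof (cases "x < y")
    case True
    then show ?thesis using *[OF \<open>0 \<le> x\<close>] by simp
  next
    case False
    then have "y < x" using assms(3) by simp
    then show ?thesis using *[OF \<open>0 \<le> y\<close>] by (simp add: add.commute)
  qed
qed

lemma powr_midpoint_greater:
  fixes x y a :: real
  assumes "0 \<le> x" "0 \<le> y" "x \<noteq> y" "1 < a"
  shows "((x + y) / 2) powr a < (x powr a + y powr a) / 2"
proof -
  have *: "((u + v) / 2) powr a < (u powr a + v powr a) / 2" if "0 \<le> u" "u < v" for u v
  proof -
    have "(- (u powr a) + - (v powr a)) / 2 < - (((u + v) / 2) powr a)"
    proof (rule midpoint_less_of_deriv_antimono[where f' = "\<lambda>z. - (a * z powr (a - 1))"])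
      show "continuous_on {u..v} (\<lambda>z. - (z powr a))"
        using that assms
        by (intro continuous_on_minus continuous_on_powr' continuous_on_id continuous_on_const) auto
      show "((\<lambda>z. - (z powr a)) has_real_derivative - (a * z powr (a - 1))) (at z)" if "u < z" for z
        using that \<open>0 \<le> u\<close> by (intro DERIV_minus has_real_derivative_powr) simp
      show "- (a * z' powr (a - 1)) < - (a * z powr (a - 1))" if "u < z" "z < z'" for z z'
        using that \<open>0 \<le> u\<close> assms powr_less_mono2[of "a - 1" z z'] by simp
    qed (rule that(2))
    then show ?thesis by simp
  qed
  show ?thesis
  proof (cases "x < y")
    case True
    then show ?thesis using *[OF \<open>0 \<le> x\<close>] by simp
  next
    case False
    then have "y < x" using assms(3) by simp
    then show ?thesis using *[OF \<open>0 \<le> y\<close>] by (simp add: add.commute)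
  qed
qed

definition powr_sum :: "real \<Rightarrow> nat \<Rightarrow> nat \<Rightarrow> (nat \<Rightarrow> nat \<Rightarrow> real) \<Rightarrow> real" where
  "powr_sum a m n P = (\<Sum>i<m. \<Sum>j<n. P i j powr a)"

lemma double_sum_strict_mono:
  fixes f g :: "nat \<Rightarrow> nat \<Rightarrow> real"
  assumes "\<And>i j. i < m \<Longrightarrow> j < n \<Longrightarrow> f i j \<le> g i j" "i0 < m" "j0 < n" "f i0 j0 < g i0 j0"
  shows "(\<Sum>i<m. \<Sum>j<n. f i j) < (\<Sum>i<m. \<Sum>j<n. g i j)"
  unfolding sum.cartesian_product
  by (rule sum_strict_mono_ex1) (use assms in auto)

lemma powr_sum_average:
  "(powr_sum a m n A + powr_sum a m n B) / 2 = (\<Sum>i<m. \<Sum>j<n. (A i j powr a + B i j powr a) / 2)"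
  unfolding powr_sum_def by (simp add: sum.distrib add_divide_distrib sum_divide_distrib)

lemma powr_sum_midpoint_less:
  assumes "0 < a" "a < 1" "\<And>i j. i < m \<Longrightarrow> j < n \<Longrightarrow> 0 \<le> A i j \<and> 0 \<le> B i j"
    and "i0 < m" "j0 < n" "A i0 j0 \<noteq> B i0 j0"
  shows "(powr_sum a m n A + powr_sum a m n B) / 2 < powr_sum a m n (\<lambda>i j. (A i j + B i j) / 2)"
proof -
  have "(powr_sum a m n A + powr_sum a m n B) / 2 = (\<Sum>i<m. \<Sum>j<n. (A i j powr a + B i j powr a) / 2)"
    by (rule powr_sum_average)
  also have "\<dots> < (\<Sum>i<m. \<Sum>j<n. ((A i j + B i j) / 2) powr a)"
  proof (rule double_sum_strict_mono)
    fix i j assume "i < m" "j < n"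
    then show "(A i j powr a + B i j powr a) / 2 \<le> ((A i j + B i j) / 2) powr a"
      using assms(1-3) powr_midpoint_less[of "A i j" "B i j" a]
      by (cases "A i j = B i j") (auto intro: less_imp_le)
  qed (use assms powr_midpoint_less in auto)
  finally show ?thesis by (simp add: powr_sum_def)
qed

lemma powr_sum_midpoint_greater:
  assumes "1 < a" "\<And>i j. i < m \<Longrightarrow> j < n \<Longrightarrow> 0 \<le> A i j \<and> 0 \<le> B i j"
    and "i0 < m" "j0 < n" "A i0 j0 \<noteq> B i0 j0"
  shows "powr_sum a m n (\<lambda>i j. (A i j + B i j) / 2) < (powr_sum a m n A + powr_sum a m n B) / 2"
proof -
  have "powr_sum a m n (\<lambda>i j. (A i j + B i j) / 2) = (\<Sum>i<m. \<Sum>j<n. ((A i j + B i j) / 2) powr a)"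
    by (simp add: powr_sum_def)
  also have "\<dots> < (\<Sum>i<m. \<Sum>j<n. (A i j powr a + B i j powr a) / 2)"
  proof (rule double_sum_strict_mono)
    fix i j assume "i < m" "j < n"
    then show "((A i j + B i j) / 2) powr a \<le> (A i j powr a + B i j powr a) / 2"
      using assms(1,2) powr_midpoint_greater[of "A i j" "B i j" a]
      by (cases "A i j = B i j") (auto intro: less_imp_le)
  qed (use assms powr_midpoint_greater in auto)
  also have "\<dots> = (powr_sum a m n A + powr_sum a m n B) / 2"
    by (rule powr_sum_average[symmetric])
  finally show ?thesis .
qed

text \<open>Since 0 powr 0 = 0, powr_sum 0 counts the nonzero entries.\<close>
lemma powr_sum_zero_strict_mono:
  assumes "support m n Q \<subset> support m n P"
  shows "powr_sum 0 m n Q < powr_sum 0 m n P"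
proof -
  obtain i0 j0 where ij0: "i0 < m" "j0 < n" "P i0 j0 \<noteq> 0" "Q i0 j0 = 0"
    using assms unfolding support_def by auto
  have "Q i j powr 0 \<le> P i j powr 0" if "i < m" "j < n" for i j
  proof (cases "Q i j = 0")
    case False
    then have "(i, j) \<in> support m n P" using assms that unfolding support_def by blast
    then show ?thesis unfolding support_def by simp
  qed simp
  moreover have "Q i0 j0 powr 0 < P i0 j0 powr 0" using ij0 by simp
  ultimately show ?thesis unfolding powr_sum_def by (intro double_sum_strict_mono[OF _ ij0(1,2)])
qed

lemma powr_sum_minimizer_peelable:
  assumes "0 \<le> a" "a < 1" and P: "P \<in> transport_polytope m n p q"
    and min: "\<And>Q. Q \<in> transport_polytope m n p q \<Longrightarrow> powr_sum a m n P \<le> powr_sum a m n Q"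
  shows "peelable (support m n P)"
proof (cases "a = 0")
  case True
  show ?thesis
  proof (rule ccontr)
    assume "\<not> peelable (support m n P)"
    then obtain Q where Q: "Q \<in> transport_polytope m n p q" "support m n Q \<subset> support m n P"
      using not_peelable_imp_smaller_support[OF P] by blast
    then have "powr_sum 0 m n Q < powr_sum 0 m n P" by (intro powr_sum_zero_strict_mono)
    then show False using min[OF Q(1)] True by simp
  qed
next
  case False
  show ?thesis
  proof (rule ccontr)
    assume "\<not> peelable (support m n P)"
    then obtain A B i j where A: "A \<in> transport_polytope m n p q" and B: "B \<in> transport_polytope m n p q"
      and "P = (\<lambda>i j. (A i j + B i j) / 2)" and "i < m" "j < n" "A i j \<noteq> B i j"
      by (rule not_peelable_imp_midpoint[OF P])
    then have "(powr_sum a m n A + powr_sum a m n B) / 2 < powr_sum a m n P"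
      using powr_sum_midpoint_less[of a m n A B] False assms(1,2)
        transport_polytopeD(2)[OF A] transport_polytopeD(2)[OF B] by simp
    then show False using min[OF A] min[OF B] by simp
  qed
qed

lemma powr_sum_maximizer_peelable:
  assumes "1 < a" and P: "P \<in> transport_polytope m n p q"
    and max: "\<And>Q. Q \<in> transport_polytope m n p q \<Longrightarrow> powr_sum a m n Q \<le> powr_sum a m n P"
  shows "peelable (support m n P)"
proof (rule ccontr)
  assume "\<not> peelable (support m n P)"
  then obtain A B i j where A: "A \<in> transport_polytope m n p q" and B: "B \<in> transport_polytope m n p q"
    and "P = (\<lambda>i j. (A i j + B i j) / 2)" and "i < m" "j < n" "A i j \<noteq> B i j"
    by (rule not_peelable_imp_midpoint[OF P])
  then have "powr_sum a m n P < (powr_sum a m n A + powr_sum a m n B) / 2"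
    using powr_sum_midpoint_greater[of a m n A B] assms(1)
      transport_polytopeD(2)[OF A] transport_polytopeD(2)[OF B] by simp
  then show False using max[OF A] max[OF B] by simp
qed

lemma entry_le_total:
  fixes P :: "nat \<Rightarrow> nat \<Rightarrow> real"
  assumes "\<And>i j. i < m \<Longrightarrow> j < n \<Longrightarrow> 0 \<le> P i j" "i < m" "j < n"
  shows "P i j \<le> (\<Sum>i<m. \<Sum>j<n. P i j)"
proof -
  have "(\<lambda>(i, j). P i j) (i, j) \<le> (\<Sum>(i, j)\<in>{..<m} \<times> {..<n}. P i j)"
    by (rule member_le_sum) (use assms in auto)
  then show ?thesis by (simp add: sum.cartesian_product)
qed

lemma powr_sum_pos:
  assumes "\<And>i j. i < m \<Longrightarrow> j < n \<Longrightarrow> 0 \<le> P i j" "(\<Sum>i<m. \<Sum>j<n. P i j) = 1"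
  shows "0 < powr_sum a m n P"
proof -
  obtain i j where ij: "i < m" "j < n" "P i j \<noteq> 0"
    using assms(2) by (metis (no_types, lifting) sum.neutral lessThan_iff zero_neq_one)
  have "P i j powr a \<le> powr_sum a m n P"
    unfolding powr_sum_def using entry_le_total[of m n "\<lambda>i j. P i j powr a"] ij by simp
  moreover have "0 < P i j powr a" using ij(3) by simp
  ultimately show ?thesis by linarith
qed

lemma powr_sum_ge_one:
  assumes "\<And>i j. i < m \<Longrightarrow> j < n \<Longrightarrow> 0 \<le> P i j" "(\<Sum>i<m. \<Sum>j<n. P i j) = 1" "0 \<le> a" "a \<le> 1"
  shows "1 \<le> powr_sum a m n P"
proof -
  have "P i j \<le> P i j powr a" if "i < m" "j < n" for i j
    using powr_mono'[of a 1 "P i j"] entry_le_total[of m n P i j] assms that by simp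
  then have "(\<Sum>i<m. \<Sum>j<n. P i j) \<le> powr_sum a m n P"
    unfolding powr_sum_def by (intro sum_mono) simp
  then show ?thesis using assms(2) by simp
qed

lemma powr_sum_le_one:
  assumes "\<And>i j. i < m \<Longrightarrow> j < n \<Longrightarrow> 0 \<le> P i j" "(\<Sum>i<m. \<Sum>j<n. P i j) = 1" "1 \<le> a"
  shows "powr_sum a m n P \<le> 1"
proof -
  have "P i j powr a \<le> P i j" if "i < m" "j < n" for i j
    using powr_mono'[of 1 a "P i j"] entry_le_total[of m n P i j] assms that by simp
  then have "powr_sum a m n P \<le> (\<Sum>i<m. \<Sum>j<n. P i j)"
    unfolding powr_sum_def by (intro sum_mono) simp
  then show ?thesis using assms(2) by simp
qed

lemma renyi_tsallis_eq:
  "renyi_entropy a m n P = ln (powr_sum a m n P) / (1 - a)"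
  "tsallis_entropy a m n P = (powr_sum a m n P - 1) / (1 - a)"
  unfolding renyi_entropy_def tsallis_entropy_def powr_sum_def by simp_all

lemma renyi_tsallis_nonneg:
  assumes "H = renyi_entropy a m n \<or> H = tsallis_entropy a m n" "0 \<le> a" "a \<noteq> 1"
    and "\<And>i j. i < m \<Longrightarrow> j < n \<Longrightarrow> 0 \<le> P i j" "(\<Sum>i<m. \<Sum>j<n. P i j) = 1"
  shows "0 \<le> H P"
proof (cases "a < 1")
  case True
  then have "1 \<le> powr_sum a m n P" using powr_sum_ge_one assms(2,4,5) by simp
  then show ?thesis using assms(1) True by (auto simp: renyi_tsallis_eq)
next
  case False
  then have "powr_sum a m n P \<le> 1" "0 < powr_sum a m n P" "1 < a"
    using powr_sum_le_one powr_sum_pos assms(3-5) by simp_all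
  then show ?thesis using assms(1) by (auto simp: renyi_tsallis_eq divide_nonpos_neg)
qed

lemma renyi_tsallis_le_imp_powr_sum:
  assumes "H = renyi_entropy a m n \<or> H = tsallis_entropy a m n" "H P \<le> H Q"
    and "0 < powr_sum a m n P" "0 < powr_sum a m n Q"
  shows "a < 1 \<Longrightarrow> powr_sum a m n P \<le> powr_sum a m n Q"
    and "1 < a \<Longrightarrow> powr_sum a m n Q \<le> powr_sum a m n P"
  using assms by (auto simp: renyi_tsallis_eq divide_le_cancel)

lemma transport_polytope_total:
  "P \<in> transport_polytope m n p q \<Longrightarrow> (\<Sum>i<m. \<Sum>j<n. P i j) = (\<Sum>i<m. p i)"
  using transport_polytopeD(3) by simp

lemma entropy_minimizer_peelable:
  assumes H: "H = renyi_entropy a m n \<or> H = tsallis_entropy a m n" and "0 \<le> a" "a \<noteq> 1"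
    and "(\<Sum>i<m. p i) = 1" and P: "P \<in> transport_polytope m n p q"
    and min: "\<And>Q. Q \<in> transport_polytope m n p q \<Longrightarrow> H P \<le> H Q"
  shows "peelable (support m n P)"
proof -
  have pos: "0 < powr_sum a m n Q" if "Q \<in> transport_polytope m n p q" for Q
    using powr_sum_pos transport_polytopeD(2)[OF that] transport_polytope_total[OF that] assms(4)
    by simp
  note le = renyi_tsallis_le_imp_powr_sum[OF H min pos[OF P] pos]
  show ?thesis
  proof (cases "a < 1")
    case True
    then show ?thesis using powr_sum_minimizer_peelable[OF assms(2) True P] le(1) by blast
  next
    case False
    then have "1 < a" using assms(3) by simp
    then show ?thesis using powr_sum_maximizer_peelable[OF _ P] le(2) by blast
  qed
qed

theorem corollary1p1:
  fixes m n :: nat and p q :: "nat \<Rightarrow> real" and \<alpha> :: real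
    and H :: "(nat \<Rightarrow> nat \<Rightarrow> real) \<Rightarrow> real" and Pt :: "nat \<Rightarrow> nat \<Rightarrow> real"
  assumes "m \<ge> 2" and "n \<ge> 2"
    and "\<forall>i<m. p i > 0" and "(\<Sum>i<m. p i) = 1"
    and "\<forall>j<n. q j > 0" and "(\<Sum>j<n. q j) = 1"
    and "\<alpha> \<ge> 0" and "\<alpha> \<noteq> 1"
    and "H = renyi_entropy \<alpha> m n \<or> H = tsallis_entropy \<alpha> m n"
    and "Pt \<in> transport_polytope m n p q"
    and "H Pt = (INF P \<in> transport_polytope m n p q. H P)"
  shows "Pt \<in> tree_polytope m n p q
    \<and> tree_polytope m n p q = extreme_points_of (transport_polytope m n p q)
    \<and> (\<forall>P \<in> tree_polytope m n p q. H Pt \<le> H P)"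
proof -
  let ?C = "transport_polytope m n p q"
  have "bdd_below (H ` ?C)"
    using renyi_tsallis_nonneg[OF assms(9,7,8)] transport_polytopeD(2) transport_polytope_total
      assms(4) by (intro bdd_belowI[of _ 0]) auto
  then have min: "H Pt \<le> H P" if "P \<in> ?C" for P
    using cINF_lower[OF _ that] assms(11) by simp
  then have "peelable (support m n Pt)"
    using entropy_minimizer_peelable[OF assms(9,7,8,4,10)] by blast
  then have "Pt \<in> extreme_points_of ?C" using peelable_imp_extreme[OF assms(10)] by blast
  moreover have "tree_polytope m n p q = extreme_points_of ?C"
    using tree_polytope_eq_extreme_points assms(1,2) by simp
  moreover have "\<forall>P \<in> tree_polytope m n p q. H Pt \<le> H P"
    using min unfolding tree_polytope_def by blast
  ultimately show ?thesis by simp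
qed

end
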